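(* Let $A$ be an Archimedean semiprime $f$-algebra which is relatively uniformly complete. Then every intermediate algebra in $A$ (i.e., every subalgebra of $A$ containing $A_b$) is an order ideal of $A$.
   Context: An $f$-algebra is a real associative algebra that is a vector lattice with $A_+A_+\subseteq A_+$ and such that $a\wedge b=0$ implies $ac\wedge b=ca\wedge b=0$ for all $c\in A_+$; it is semiprime if $0$ is its only nilpotent element. $A_b=\{a\in A: a^2\le\mu|a|\text{ for some }\mu\in(0,\infty)\}$ is the set of bounded elements. An order ideal is a solid vector subspace. *)

theory Defs
  imports Complex_Main
begin

definition vabs :: "'a::{ordered_real_vector,lattice} \<Rightarrow> 'a" where
  "vabs a = sup a (- a)"

definition f_algebra :: "'a::{real_algebra,ordered_real_vector,lattice} itself \<Rightarrow> bool" where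
  "f_algebra _ \<longleftrightarrow>
     (\<forall>a b::'a. 0 \<le> a \<longrightarrow> 0 \<le> b \<longrightarrow> 0 \<le> a * b) \<and>
     (\<forall>a b c::'a. inf a b = 0 \<longrightarrow> 0 \<le> c \<longrightarrow> inf (a * c) b = 0 \<and> inf (c * a) b = 0)"

definition nilpotent :: "'a::real_algebra \<Rightarrow> bool" where
  "nilpotent a \<longleftrightarrow> (\<exists>n. (((*) a) ^^ n) a = 0)"   \<comment> \<open>a^(n+1) = 0\<close>

definition semiprime :: "'a::real_algebra itself \<Rightarrow> bool" where
  "semiprime _ \<longleftrightarrow> (\<forall>a::'a. nilpotent a \<longrightarrow> a = 0)"

definition archimedean_vl :: "'a::{ordered_real_vector,lattice} itself \<Rightarrow> bool" where
  "archimedean_vl _ \<longleftrightarrow>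
     (\<forall>a b::'a. 0 \<le> a \<longrightarrow> (\<forall>n::nat. real n *\<^sub>R a \<le> b) \<longrightarrow> a = 0)"

definition ru_cauchy :: "(nat \<Rightarrow> 'a::{ordered_real_vector,lattice}) \<Rightarrow> bool" where
  "ru_cauchy x \<longleftrightarrow> (\<exists>u\<ge>0. \<forall>\<epsilon>>0. \<exists>N. \<forall>m\<ge>N. \<forall>n\<ge>N. vabs (x m - x n) \<le> \<epsilon> *\<^sub>R u)"

definition ru_converges :: "(nat \<Rightarrow> 'a::{ordered_real_vector,lattice}) \<Rightarrow> 'a \<Rightarrow> bool" where
  "ru_converges x y \<longleftrightarrow> (\<exists>u\<ge>0. \<forall>\<epsilon>>0. \<exists>N. \<forall>n\<ge>N. vabs (x n - y) \<le> \<epsilon> *\<^sub>R u)"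

definition ru_complete :: "'a::{ordered_real_vector,lattice} itself \<Rightarrow> bool" where
  "ru_complete _ \<longleftrightarrow> (\<forall>x::nat \<Rightarrow> 'a. ru_cauchy x \<longrightarrow> (\<exists>y. ru_converges x y))"

definition bounded_elements :: "'a::{real_algebra,ordered_real_vector,lattice} set" where
  "bounded_elements = {a. \<exists>\<mu>>0. a * a \<le> \<mu> *\<^sub>R vabs a}"

definition subalgebra :: "'a::real_algebra set \<Rightarrow> bool" where
  "subalgebra B \<longleftrightarrow> 0 \<in> B \<and> (\<forall>a\<in>B. \<forall>b\<in>B. a + b \<in> B \<and> a * b \<in> B)
     \<and> (\<forall>a\<in>B. \<forall>r::real. r *\<^sub>R a \<in> B)"

definition order_ideal :: "'a::{ordered_real_vector,lattice} set \<Rightarrow> bool" where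
  "order_ideal B \<longleftrightarrow> 0 \<in> B \<and> (\<forall>a\<in>B. \<forall>b\<in>B. a + b \<in> B) \<and> (\<forall>a\<in>B. \<forall>r::real. r *\<^sub>R a \<in> B)
     \<and> (\<forall>a b. b \<in> B \<longrightarrow> vabs a \<le> vabs b \<longrightarrow> a \<in> B)"

end

theory Submission
  imports Defs "HOL-Library.Lattice_Algebras"
begin

text \<open>
  Let \<open>b \<in> B\<close> and \<open>\<bar>a\<bar> \<le> \<bar>b\<bar>\<close>, and put \<open>s = b\<^sup>2 = \<bar>b\<bar>\<^sup>2\<close>. Multiplication by
  \<open>s \<ge> 0\<close> preserves disjointness, so \<open>T y = y + s y\<close> is a Riesz homomorphism with \<open>y \<le> T y\<close>
  on the positive cone. Such a map reflects the order, and in an Archimedean, relatively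
  uniformly complete vector lattice it is onto: bisection yields nested intervals
  \<open>[L\<^sub>n, U\<^sub>n]\<close> of geometrically shrinking width with \<open>T L\<^sub>n \<le> x \<le> T U\<^sub>n\<close>.
  Solve \<open>T v = a\<close> and \<open>T q = \<bar>b\<bar>\<close>. Then \<open>\<bar>v\<bar> \<le> q\<close>, and semiprimeness turns
  \<open>q + \<bar>b\<bar>\<^sup>2 q = \<bar>b\<bar>\<close> into \<open>q\<^sup>2 \<le> q\<close>, hence \<open>v\<^sup>2 \<le> \<bar>v\<bar>\<close>. So \<open>v\<close> is a bounded
  element, \<open>v \<in> B\<close>, and \<open>a = v + b (b v) \<in> B\<close>.
\<close>

section \<open>Lattice-ordered groups\<close>

context lattice_ab_group_add
begin

lemma inf_pprt_minus_nprt: "inf (pprt a) (- nprt a) = 0"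
proof -
  have "pprt a - inf (pprt a) (- nprt a) = sup 0 (pprt a + nprt a)"
    by (simp add: add_sup_distrib_left)
  also have "\<dots> = pprt a"
    by (simp only: prts[symmetric]) (simp add: pprt_def sup_commute)
  finally show ?thesis
    by (simp only: diff_eq_eq add_cancel_right_right)
qed

lemma pprt_diff_of_inf_eq_0:
  assumes "inf p n = 0"
  shows "pprt (p - n) = p"
proof -
  have "pprt (p - n) = p + sup (- n) (- p)"
    by (simp add: pprt_def add_sup_distrib_left)
  also have "\<dots> = p - inf n p"
    by simp
  finally show ?thesis
    using assms by (simp add: inf_commute del: diff_inf_eq_sup)
qed

lemma
  assumes "inf a b = 0"
  shows nonneg_left_of_inf_eq_0: "0 \<le> a" and nonneg_right_of_inf_eq_0: "0 \<le> b"
  using inf.cobounded1[of a b] inf.cobounded2[of a b] by (simp_all add: assms)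

lemma inf_add_eq_0:
  assumes "inf u a = 0" and "inf u b = 0"
  shows "inf u (a + b) = 0"
proof -
  define w where "w = inf u (a + b)"
  have "0 \<le> u" "0 \<le> a" "0 \<le> b"
    using nonneg_left_of_inf_eq_0[OF assms(1)] nonneg_right_of_inf_eq_0[OF assms(1)]
      nonneg_right_of_inf_eq_0[OF assms(2)] .
  then have "0 \<le> w"
    by (simp add: w_def)
  have "w = w - inf u a"
    using assms(1) by simp
  also have "\<dots> = sup (w - u) (w - a)"
    by (simp add: add_sup_distrib_left)
  also have "\<dots> \<le> b"
  proof (rule sup_least)
    show "w - u \<le> b"
      using \<open>0 \<le> b\<close> by (simp add: w_def diff_le_eq add_increasing)
    show "w - a \<le> b"
      by (simp add: w_def diff_le_eq add.commute)
  qed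
  finally have "w \<le> inf u b"
    by (simp add: w_def)
  with assms(2) have "w \<le> 0"
    by simp
  then show ?thesis
    using \<open>0 \<le> w\<close> unfolding w_def by (rule order.antisym)
qed

lemma inf_add_add_eq_0:
  assumes "inf a c = 0" and "inf a d = 0" and "inf b c = 0" and "inf b d = 0"
  shows "inf (a + b) (c + d) = 0"
proof -
  have "inf (c + d) a = 0" "inf (c + d) b = 0"
    using assms by (simp_all add: inf_add_eq_0 inf_commute)
  then have "inf (c + d) (a + b) = 0"
    by (rule inf_add_eq_0)
  then show ?thesis
    by (simp add: inf_commute)
qed

lemma sup_eq_add_pprt_diff: "sup a b = b + pprt (a - b)"
  by (simp add: pprt_def add_sup_distrib_left algebra_simps)

end

text \<open>
  A type variable of sort \<open>{ordered_real_vector, lattice}\<close> is not of class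
  \<^class>\<open>lattice_ab_group_add_abs\<close>; interpreting the class locale with \<^const>\<open>vabs\<close> as absolute
  value makes the library theory of \<open>pprt\<close>, \<open>nprt\<close> and \<open>\<bar>_\<bar>\<close> available under the prefix
  \<open>vl\<close>. Note that \<open>nprt x = inf x 0\<close> is nonpositive.
\<close>

interpretation vl: lattice_ab_group_add_abs vabs "(+)" "0::'a::{ordered_real_vector,lattice}"
    "(-)" uminus "(\<le>)" "(<)" inf sup
  by (intro class.lattice_ab_group_add_abs.intro class.lattice_ab_group_add.intro
        class.lattice_ab_group_add_abs_axioms.intro;
      (rule ordered_ab_group_add_class.ordered_ab_group_add_axioms lattice_class.lattice_axioms)?)
    (simp add: vabs_def)

section \<open>Relatively uniform convergence\<close>

lemma archimedean_vl_eq_0: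
  fixes w u :: "'a::{ordered_real_vector,lattice}"
  assumes "archimedean_vl TYPE('a)" and "0 \<le> w" and "\<And>\<epsilon>. 0 < \<epsilon> \<Longrightarrow> w \<le> \<epsilon> *\<^sub>R u"
  shows "w = 0"
proof -
  have "real n *\<^sub>R w \<le> u" for n
  proof -
    have "real n *\<^sub>R w \<le> (real n + 1) *\<^sub>R w"
      using \<open>0 \<le> w\<close> by (intro scaleR_right_mono) auto
    also have "\<dots> \<le> (real n + 1) *\<^sub>R ((1 / (real n + 1)) *\<^sub>R u)"
      using assms(3)[of "1 / (real n + 1)"] by (intro scaleR_left_mono) auto
    also have "\<dots> = u"
      by simp
    finally show ?thesis .
  qed
  then show ?thesis
    using assms(1,2) unfolding archimedean_vl_def by blast
qed

lemma half_power_scaleR_le: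
  fixes u :: "'a::ordered_real_vector"
  assumes "0 \<le> u" and "0 < \<epsilon>"
  obtains n where "(1 / 2) ^ n *\<^sub>R u \<le> \<epsilon> *\<^sub>R u"
proof -
  obtain n where "(1 / 2 :: real) ^ n < \<epsilon>"
    using real_arch_pow_inv[OF \<open>0 < \<epsilon>\<close>, of "1 / 2"] by auto
  then have "(1 / 2) ^ n *\<^sub>R u \<le> \<epsilon> *\<^sub>R u"
    using \<open>0 \<le> u\<close> by (intro scaleR_right_mono) auto
  then show ?thesis
    by (rule that)
qed

lemma ru_converges_le:
  fixes y :: "nat \<Rightarrow> 'a::{ordered_real_vector,lattice}"
  assumes "archimedean_vl TYPE('a)" and "ru_converges y H" and "\<And>m. N \<le> m \<Longrightarrow> y m \<le> a"
  shows "H \<le> a"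
proof -
  obtain u where conv: "\<And>\<epsilon>. 0 < \<epsilon> \<Longrightarrow> \<exists>M. \<forall>n\<ge>M. vabs (y n - H) \<le> \<epsilon> *\<^sub>R u"
    using assms(2) unfolding ru_converges_def by blast
  have "vl.pprt (H - a) \<le> \<epsilon> *\<^sub>R u" if \<epsilon>: "0 < \<epsilon>" for \<epsilon>
  proof -
    obtain M where M: "\<forall>n\<ge>M. vabs (y n - H) \<le> \<epsilon> *\<^sub>R u"
      using conv[OF \<epsilon>] by blast
    define m where "m = max N M"
    have bound: "vabs (y m - H) \<le> \<epsilon> *\<^sub>R u"
      using M by (simp add: m_def)
    have "H - a \<le> H - y m"
      by (simp add: assms(3) m_def diff_left_mono)
    also have "\<dots> \<le> vabs (y m - H)"
      using vl.abs_ge_minus_self[of "y m - H"] by simp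
    finally have "H - a \<le> \<epsilon> *\<^sub>R u"
      using bound by (rule order_trans)
    moreover have "0 \<le> \<epsilon> *\<^sub>R u"
      using vl.abs_ge_zero bound by (rule order_trans)
    ultimately show ?thesis
      by (simp add: vl.pprt_def)
  qed
  then have "vl.pprt (H - a) = 0"
    using assms(1) by (intro archimedean_vl_eq_0) simp_all
  then show ?thesis
    by (simp flip: vl.le_zero_iff_zero_pprt)
qed

lemma ru_converges_ge:
  fixes y :: "nat \<Rightarrow> 'a::{ordered_real_vector,lattice}"
  assumes "archimedean_vl TYPE('a)" and "ru_converges y H" and "\<And>m. N \<le> m \<Longrightarrow> a \<le> y m"
  shows "a \<le> H"
proof -
  have "ru_converges (\<lambda>n. - y n) (- H)"
    using assms(2) by (simp add: ru_converges_def vl.abs_minus_commute)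
  with assms(1) have "- H \<le> - a"
    by (rule ru_converges_le[where N = N]) (simp add: assms(3))
  then show ?thesis
    by simp
qed

lemma ru_complete_nested_intervals:
  fixes L U :: "nat \<Rightarrow> 'a::{ordered_real_vector,lattice}"
  assumes "archimedean_vl TYPE('a)" and "ru_complete TYPE('a)"
    and "incseq L" and "\<And>m n. L m \<le> U n"
    and "0 \<le> u" and "\<And>\<epsilon>. 0 < \<epsilon> \<Longrightarrow> \<exists>n. U n - L n \<le> \<epsilon> *\<^sub>R u"
  obtains H where "\<And>n. L n \<le> H" and "\<And>n. H \<le> U n"
proof -
  have "ru_cauchy L"
    unfolding ru_cauchy_def
  proof (intro exI[of _ u] conjI allI impI)
    fix \<epsilon> :: real
    assume "0 < \<epsilon>"
    then obtain N where N: "U N - L N \<le> \<epsilon> *\<^sub>R u"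
      using assms(6) by blast
    have "vabs (L m - L n) \<le> \<epsilon> *\<^sub>R u" if "N \<le> m" "N \<le> n" for m n
    proof -
      have "L N \<le> L m" "L N \<le> L n"
        using \<open>incseq L\<close> that by (auto dest: incseqD)
      then have "L m - L n \<le> U N - L N" "L n - L m \<le> U N - L N"
        using assms(4) by (auto intro: diff_mono)
      then show ?thesis
        using N by (auto simp: vl.abs_le_iff)
    qed
    then show "\<exists>N. \<forall>m\<ge>N. \<forall>n\<ge>N. vabs (L m - L n) \<le> \<epsilon> *\<^sub>R u"
      by blast
  qed fact
  then obtain H where "ru_converges L H"
    using assms(2) unfolding ru_complete_def by blast
  show ?thesis
  proof
    show "L n \<le> H" for n
      using assms(1) \<open>ru_converges L H\<close>
      by (rule ru_converges_ge) (use \<open>incseq L\<close> in \<open>auto dest: incseqD\<close>)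
    show "H \<le> U n" for n
      using assms(1) \<open>ru_converges L H\<close> by (rule ru_converges_le) (use assms(4) in auto)
  qed
qed

section \<open>Riesz homomorphisms\<close>

locale riesz_hom =
  fixes T :: "'a::{ordered_real_vector,lattice} \<Rightarrow> 'a"
  assumes linear: "linear T"
    and map_sup: "T (sup a b) = sup (T a) (T b)"
begin

lemmas map_add = linear_add[OF linear]
  and map_diff = linear_diff[OF linear]
  and map_scaleR = linear_scale[OF linear]
  and map_minus = linear_neg[OF linear]
  and map_0 = linear_0[OF linear]

lemma mono: "a \<le> b \<Longrightarrow> T a \<le> T b"
  by (metis map_sup sup.absorb2 sup.cobounded1)

lemma map_inf: "T (inf a b) = inf (T a) (T b)"
proof -
  have inf_eq: "inf u v = u + v - sup u v" for u v :: 'a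
    using vl.add_eq_inf_sup[of u v] by (metis add_diff_cancel_left')
  show ?thesis
    by (simp only: inf_eq[of a b] inf_eq[of "T a" "T b"] map_add map_diff map_sup)
qed

lemma map_pprt: "T (vl.pprt a) = vl.pprt (T a)"
  by (simp add: vl.pprt_def map_sup map_0)

lemma map_nprt: "T (vl.nprt a) = vl.nprt (T a)"
  by (simp add: vl.nprt_def map_inf map_0)

lemma map_vabs: "T (vabs a) = vabs (T a)"
  by (simp add: vl.abs_prts map_diff map_pprt map_nprt)

end

lemma riesz_homI_disjoint:
  fixes T :: "'a::{ordered_real_vector,lattice} \<Rightarrow> 'a"
  assumes "linear T"
    and disjoint: "\<And>p n. inf p n = 0 \<Longrightarrow> inf (T p) (T n) = 0"
  shows "riesz_hom T"
proof -
  have map_pprt: "T (vl.pprt a) = vl.pprt (T a)" for a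
  proof -
    have "inf (T (vl.pprt a)) (T (- vl.nprt a)) = 0"
      by (rule disjoint) (rule vl.inf_pprt_minus_nprt)
    moreover have "T a = T (vl.pprt a) - T (- vl.nprt a)"
      by (metis vl.prts diff_minus_eq_add linear_diff[OF \<open>linear T\<close>])
    ultimately show ?thesis
      by (simp add: vl.pprt_diff_of_inf_eq_0)
  qed
  show ?thesis
  proof (rule riesz_hom.intro[OF \<open>linear T\<close>])
    show "T (sup a b) = sup (T a) (T b)" for a b
      by (simp add: vl.sup_eq_add_pprt_diff linear_add[OF \<open>linear T\<close>]
          linear_diff[OF \<open>linear T\<close>] map_pprt)
  qed
qed

locale expansive_riesz_hom = riesz_hom +
  assumes expansive: "0 \<le> a \<Longrightarrow> a \<le> T a"
begin

lemma le_iff: "T a \<le> T b \<longleftrightarrow> a \<le> b"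
proof
  assume "T a \<le> T b"
  then have "T (vl.pprt (a - b)) = 0"
    by (simp add: map_pprt map_diff)
  then have "vl.pprt (a - b) = 0"
    using expansive[of "vl.pprt (a - b)"] by (simp add: order.antisym)
  then show "a \<le> b"
    by (simp flip: vl.le_zero_iff_zero_pprt)
qed (rule mono)

lemma inj: "inj T"
  by (rule injI) (simp add: order.eq_iff le_iff)

text \<open>
  Since \<open>T\<close> is expansive on the positive cone, lowering the midpoint \<open>M\<close> by the positive part
  of \<open>f = T M - x\<close> gives a point whose image lies below \<open>x\<close>, and raising it by the negative
  part one whose image lies above \<open>x\<close>; the two shifts are disjoint, which halves the width.
\<close>

definition bisection_step :: "'a \<Rightarrow> 'a \<times> 'a \<Rightarrow> 'a \<times> 'a" where
  "bisection_step x = (\<lambda>(L, U).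
     let M = (1 / 2) *\<^sub>R (L + U); f = T M - x
     in (sup L (M - vl.pprt f), inf U (M - vl.nprt f)))"

lemma bisection_step:
  assumes "T L \<le> x" and "x \<le> T U" and "bisection_step x (L, U) = (L', U')"
  shows "T L' \<le> x" and "x \<le> T U'" and "U' - L' \<le> (1 / 2) *\<^sub>R (U - L)"
proof -
  define M where "M = (1 / 2) *\<^sub>R (L + U)"
  define f where "f = T M - x"
  define h where "h = (1 / 2) *\<^sub>R (U - L)"
  have L': "L' = sup L (M - vl.pprt f)" and U': "U' = inf U (M - vl.nprt f)"
    using assms(3) by (simp_all add: bisection_step_def M_def f_def Let_def)
  have "f \<le> vl.pprt f" "vl.nprt f \<le> f"
    by (simp_all add: vl.pprt_def vl.nprt_def)
  have "T (M - vl.pprt f) \<le> T M - f"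
    using expansive[of "vl.pprt f"] \<open>f \<le> vl.pprt f\<close> by (simp add: map_diff)
  then show "T L' \<le> x"
    using assms(1) by (simp add: L' map_sup f_def)
  have "T M - f \<le> T (M - vl.nprt f)"
    using expansive[of "- vl.nprt f"] \<open>vl.nprt f \<le> f\<close> by (simp add: map_diff map_minus)
  then show "x \<le> T U'"
    using assms(2) by (simp add: U' map_inf f_def)
  have "M = L + h" "M = U - h"
    by (simp_all add: M_def h_def algebra_simps flip: scaleR_2)
  have "U' - L' \<le> (M - vl.nprt f) - L"
    unfolding L' U' by (rule diff_mono) simp_all
  moreover have "U' - L' \<le> U - (M - vl.pprt f)"
    unfolding L' U' by (rule diff_mono) simp_all
  ultimately have "U' - L' \<le> inf (h - vl.nprt f) (h + vl.pprt f)"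
    using \<open>M = L + h\<close> \<open>M = U - h\<close> by (simp add: algebra_simps)
  also have "\<dots> = h + inf (- vl.nprt f) (vl.pprt f)"
    by (simp add: vl.add_inf_distrib_left)
  finally show "U' - L' \<le> (1 / 2) *\<^sub>R (U - L)"
    by (simp add: h_def inf_commute vl.inf_pprt_minus_nprt)
qed

definition bisection :: "'a \<Rightarrow> nat \<Rightarrow> 'a \<times> 'a" where
  "bisection x n = (bisection_step x ^^ n) (- vabs x, vabs x)"

lemma bisection_Suc: "bisection x (Suc n) = bisection_step x (bisection x n)"
  by (simp add: bisection_def)

lemma incseq_fst_bisection: "incseq (\<lambda>n. fst (bisection x n))"
  by (rule incseq_SucI) (simp add: bisection_Suc bisection_step_def split_beta Let_def)

lemma bisection:
  "T (fst (bisection x n)) \<le> x \<and> x \<le> T (snd (bisection x n)) \<and>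
   snd (bisection x n) - fst (bisection x n) \<le> (1 / 2) ^ n *\<^sub>R (2 *\<^sub>R vabs x)"
proof (induction n)
  case 0
  have "- vabs x \<le> x"
    using vl.abs_ge_minus_self[of x] by (simp add: minus_le_iff)
  then have "T (- vabs x) \<le> x"
    using expansive[of "vabs x"] by (simp add: map_minus) (meson neg_le_iff_le order_trans)
  moreover have "x \<le> T (vabs x)"
    using vl.abs_ge_self[of x] expansive[of "vabs x"] by simp
  ultimately show ?case
    by (simp add: bisection_def scaleR_2)
next
  case (Suc n)
  obtain L U where LU: "bisection x n = (L, U)"
    by fastforce
  obtain L' U' where LU': "bisection_step x (L, U) = (L', U')"
    by fastforce
  have "T L \<le> x" "x \<le> T U" and gap: "U - L \<le> (1 / 2) ^ n *\<^sub>R (2 *\<^sub>R vabs x)"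
    using Suc.IH by (simp_all add: LU)
  note step = bisection_step[OF this(1,2) LU']
  note step(3)
  also have "(1 / 2) *\<^sub>R (U - L) \<le> (1 / 2) *\<^sub>R ((1 / 2) ^ n *\<^sub>R (2 *\<^sub>R vabs x))"
    using gap by (rule scaleR_left_mono) simp
  finally show ?case
    using step(1,2) by (simp add: bisection_Suc LU LU')
qed

lemma bisection_limit:
  assumes "archimedean_vl TYPE('a)" and "ru_complete TYPE('a)"
  obtains H where "\<And>n. fst (bisection x n) \<le> H" and "\<And>n. H \<le> snd (bisection x n)"
proof (rule ru_complete_nested_intervals[OF assms, where u = "2 *\<^sub>R vabs x"])
  have TL: "T (fst (bisection x n)) \<le> x" and TU: "x \<le> T (snd (bisection x n))"
    and gap: "snd (bisection x n) - fst (bisection x n) \<le> (1 / 2) ^ n *\<^sub>R (2 *\<^sub>R vabs x)" for n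
    using bisection[of x n] by simp_all
  show "incseq (\<lambda>n. fst (bisection x n))"
    by (rule incseq_fst_bisection)
  show "fst (bisection x m) \<le> snd (bisection x n)" for m n
    using order_trans[OF TL[of m] TU[of n]] by (simp add: le_iff)
  show "0 \<le> 2 *\<^sub>R vabs x"
    by (simp add: scaleR_nonneg_nonneg)
  show "\<exists>n. snd (bisection x n) - fst (bisection x n) \<le> \<epsilon> *\<^sub>R (2 *\<^sub>R vabs x)"
    if \<epsilon>: "0 < \<epsilon>" for \<epsilon>
  proof -
    obtain n where "(1 / 2) ^ n *\<^sub>R (2 *\<^sub>R vabs x) \<le> \<epsilon> *\<^sub>R (2 *\<^sub>R vabs x)"
      using \<open>0 \<le> 2 *\<^sub>R vabs x\<close> \<epsilon> by (rule half_power_scaleR_le)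
    with gap[of n] show ?thesis
      by (intro exI[of _ n]) (rule order_trans)
  qed
qed (rule that)

lemma surj:
  assumes "archimedean_vl TYPE('a)" and "ru_complete TYPE('a)"
  shows "surj T"
  unfolding surj_def
proof
  fix x
  obtain H where LH: "fst (bisection x n) \<le> H" and HU: "H \<le> snd (bisection x n)" for n
    using bisection_limit[OF assms] by metis
  define g where "g = 2 *\<^sub>R vabs x"
  have "0 \<le> g"
    by (simp add: g_def scaleR_nonneg_nonneg)
  then have "0 \<le> T g"
    using expansive[OF \<open>0 \<le> g\<close>] by (rule order_trans)
  have close: "vabs (T H - x) \<le> (1 / 2) ^ n *\<^sub>R T g" for n
  proof -
    let ?L = "fst (bisection x n)" and ?U = "snd (bisection x n)"
    have "T ?U - T ?L = T (?U - ?L)"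
      by (simp add: map_diff)
    also have "\<dots> \<le> T ((1 / 2) ^ n *\<^sub>R g)"
      using bisection[of x n] by (intro mono) (simp add: g_def)
    also have "\<dots> = (1 / 2) ^ n *\<^sub>R T g"
      by (rule map_scaleR)
    finally have width: "T ?U - T ?L \<le> (1 / 2) ^ n *\<^sub>R T g" .
    have "T H - x \<le> T ?U - T ?L" "- (T H - x) \<le> T ?U - T ?L"
      using mono[OF LH] mono[OF HU] bisection[of x n] by (auto intro: diff_mono)
    with width show ?thesis
      unfolding vl.abs_le_iff by (auto dest: order_trans)
  qed
  have "vabs (T H - x) \<le> \<epsilon> *\<^sub>R T g" if \<epsilon>: "0 < \<epsilon>" for \<epsilon>
  proof -
    obtain n where "(1 / 2) ^ n *\<^sub>R T g \<le> \<epsilon> *\<^sub>R T g"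
      using \<open>0 \<le> T g\<close> \<epsilon> by (rule half_power_scaleR_le)
    with close[of n] show ?thesis
      by (rule order_trans)
  qed
  then have "vabs (T H - x) = 0"
    using assms(1) by (intro archimedean_vl_eq_0) simp_all
  then show "\<exists>v. x = T v"
    by auto
qed

end

section \<open>f-algebras\<close>

context
  assumes f_algebra: "f_algebra TYPE('a::{real_algebra,ordered_real_vector,lattice})"
begin

lemma f_mult_nonneg: "0 \<le> a \<Longrightarrow> 0 \<le> b \<Longrightarrow> 0 \<le> a * b" for a b :: 'a
  using f_algebra by (simp add: f_algebra_def)

lemma f_inf_mult_eq_0:
  fixes a b c :: 'a
  assumes "inf a b = 0" and "0 \<le> c"
  shows "inf (c * a) b = 0" and "inf (a * c) b = 0"
  using f_algebra assms by (simp_all add: f_algebra_def)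

lemma f_mult_left_mono: "0 \<le> c \<Longrightarrow> a \<le> b \<Longrightarrow> c * a \<le> c * b" for a b c :: 'a
  using f_mult_nonneg[of c "b - a"] by (simp add: right_diff_distrib)

lemma f_mult_right_mono: "0 \<le> c \<Longrightarrow> a \<le> b \<Longrightarrow> a * c \<le> b * c" for a b c :: 'a
  using f_mult_nonneg[of "b - a" c] by (simp add: left_diff_distrib)

lemma f_mult_eq_0_of_inf_eq_0:
  fixes a b :: 'a
  assumes "inf a b = 0"
  shows "a * b = 0"
proof -
  have "0 \<le> a" "0 \<le> b"
    using vl.nonneg_left_of_inf_eq_0[OF assms] vl.nonneg_right_of_inf_eq_0[OF assms] .
  have "inf (a * b) b = 0"
    by (rule f_inf_mult_eq_0(2)[OF assms \<open>0 \<le> b\<close>])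
  then have "inf b (a * b) = 0"
    by (simp add: inf_commute)
  then have "inf (a * b) (a * b) = 0"
    by (rule f_inf_mult_eq_0(1)[OF _ \<open>0 \<le> a\<close>])
  then show ?thesis
    by simp
qed

lemma f_mult_self_eq_vabs: "a * a = vabs a * vabs a" for a :: 'a
proof -
  define p n where "p = vl.pprt a" and "n = - vl.nprt a"
  have "inf p n = 0"
    unfolding p_def n_def by (rule vl.inf_pprt_minus_nprt)
  then have "p * n = 0" "n * p = 0"
    by (simp_all add: f_mult_eq_0_of_inf_eq_0 inf_commute)
  have "a * a = (p - n) * (p - n)"
    by (simp add: p_def n_def flip: vl.prts)
  also have "\<dots> = (p + n) * (p + n)"
    using \<open>p * n = 0\<close> \<open>n * p = 0\<close> by (simp add: algebra_simps)
  also have "\<dots> = vabs a * vabs a"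
    by (simp add: p_def n_def vl.abs_prts)
  finally show ?thesis .
qed

lemma f_inf_mult_mult_eq_0:
  fixes a b c :: 'a
  assumes "inf a b = 0" and "0 \<le> c"
  shows "inf (c * a) (c * b) = 0"
proof -
  have "inf b (c * a) = 0"
    using f_inf_mult_eq_0(1)[OF assms] by (simp add: inf_commute)
  then have "inf (c * b) (c * a) = 0"
    by (rule f_inf_mult_eq_0(1)[OF _ assms(2)])
  then show ?thesis
    by (simp add: inf_commute)
qed

lemma f_riesz_hom_mult_left:
  fixes c :: 'a
  assumes "0 \<le> c"
  shows "riesz_hom (\<lambda>a. c * a)"
proof (rule riesz_homI_disjoint)
  show "linear (\<lambda>a. c * a)"
    by (rule linearI) (simp_all add: distrib_left)
  show "inf (c * p) (c * n) = 0" if "inf p n = 0" for p n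
    using that assms by (rule f_inf_mult_mult_eq_0)
qed

lemma f_expansive_riesz_hom_add_mult:
  fixes s :: 'a
  assumes "0 \<le> s"
  shows "expansive_riesz_hom (\<lambda>a. a + s * a)"
proof (intro expansive_riesz_hom.intro expansive_riesz_hom_axioms.intro riesz_homI_disjoint)
  show "linear (\<lambda>a. a + s * a)"
    by (rule linearI) (simp_all add: algebra_simps)
  show "a \<le> a + s * a" if "0 \<le> a" for a
    using f_mult_nonneg[OF assms that] by simp
  show "inf (p + s * p) (n + s * n) = 0" if "inf p n = 0" for p n
  proof (rule vl.inf_add_add_eq_0[OF that])
    have "inf n p = 0"
      using that by (simp add: inf_commute)
    from f_inf_mult_eq_0(1)[OF this assms] show "inf p (s * n) = 0"
      by (simp add: inf_commute)
    show "inf (s * p) n = 0"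
      using that assms by (rule f_inf_mult_eq_0(1))
    show "inf (s * p) (s * n) = 0"
      using that assms by (rule f_inf_mult_mult_eq_0)
  qed
qed

context
  assumes semiprime: "semiprime TYPE('a)"
begin

lemma f_inf_eq_0_of_mult_eq_0:
  fixes a b :: 'a
  assumes "0 \<le> a" and "0 \<le> b" and "a * b = 0"
  shows "inf a b = 0"
proof -
  define m where "m = inf a b"
  have "0 \<le> m"
    using assms(1,2) by (simp add: m_def)
  have "m * m \<le> a * m"
    using f_mult_right_mono[OF \<open>0 \<le> m\<close>] by (simp add: m_def)
  also have "\<dots> \<le> a * b"
    using f_mult_left_mono[OF \<open>0 \<le> a\<close>] by (simp add: m_def)
  finally have "m * m = 0"
    using f_mult_nonneg[OF \<open>0 \<le> m\<close> \<open>0 \<le> m\<close>] assms(3) by simp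
  then have "nilpotent m"
    unfolding nilpotent_def by (intro exI[of _ 1]) simp
  then show ?thesis
    using semiprime unfolding semiprime_def m_def by blast
qed

lemma f_nonpos_of_mult_nonpos:
  fixes z d g :: 'a
  assumes "0 \<le> z" and "z * d \<le> 0" and "0 \<le> g" and "d \<le> z * g"
  shows "d \<le> 0"
proof -
  interpret L: riesz_hom "\<lambda>a. z * a"
    using \<open>0 \<le> z\<close> by (rule f_riesz_hom_mult_left)
  define e where "e = vl.pprt d"
  have "z * e = 0"
    using assms(2) by (simp add: e_def L.map_pprt)
  then have "inf z e = 0"
    using assms(1) by (intro f_inf_eq_0_of_mult_eq_0) (simp_all add: e_def)
  then have "inf (z * g) e = 0"
    using f_inf_mult_eq_0(2)[OF _ \<open>0 \<le> g\<close>] by blast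
  moreover have "e \<le> z * g"
    using assms(4) f_mult_nonneg[OF assms(1,3)] by (simp add: e_def vl.pprt_def)
  ultimately have "e = 0"
    by (simp add: inf_absorb2)
  then show ?thesis
    by (simp add: e_def flip: vl.le_zero_iff_zero_pprt)
qed

lemma f_mult_mult_self_le_of_eq:
  fixes c q :: 'a
  assumes "0 \<le> c" and "0 \<le> q" and "c * q = q * c" and eq: "q + (c * c) * q = c"
  shows "q \<le> c" and "c * (q * q) \<le> q"
proof -
  have "0 \<le> (c * c) * q" "0 \<le> q * q"
    using assms(1,2) by (simp_all add: f_mult_nonneg)
  then have "q \<le> q + (c * c) * q" "(c * c) * q \<le> q + (c * c) * q"
    using assms(2) by simp_all
  then have "q \<le> c" and "(c * c) * q \<le> c"
    unfolding eq .
  then show "q \<le> c"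
    by simp
  have "q * ((c * c) * q) = c * (c * (q * q))"
    using assms(3) by (metis mult.assoc)
  then have "c * (c * (q * q) - q) = q * ((c * c) * q) - q * c"
    using assms(3) by (simp add: right_diff_distrib)
  also have "\<dots> \<le> 0"
    using f_mult_left_mono[OF assms(2) \<open>(c * c) * q \<le> c\<close>] by simp
  finally have "c * (c * (q * q) - q) \<le> 0" .
  moreover have "c * (q * q) - q \<le> c * (q * q)"
    using assms(2) by simp
  ultimately have "c * (q * q) - q \<le> 0"
    using f_nonpos_of_mult_nonpos[OF \<open>0 \<le> c\<close> _ \<open>0 \<le> q * q\<close>] by blast
  then show "c * (q * q) \<le> q"
    by simp
qed

lemma f_mult_self_le_self_of_eq:
  fixes c q :: 'a
  assumes "0 \<le> c" and "0 \<le> q" and "c * q = q * c" and "q + (c * c) * q = c"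
  shows "q * q \<le> q"
proof -
  note bounds = f_mult_mult_self_le_of_eq[OF assms]
  have "0 \<le> q * q"
    using assms(2) by (simp add: f_mult_nonneg)
  have "(q * q) * (q * q) \<le> (c * q) * (q * q)"
    using f_mult_left_mono[OF assms(2) bounds(1)] assms(3)
    by (intro f_mult_right_mono[OF \<open>0 \<le> q * q\<close>]) simp
  also have "\<dots> = (c * (q * q)) * q"
    by (simp add: mult.assoc)
  also have "\<dots> \<le> q * q"
    using f_mult_right_mono[OF assms(2) bounds(2)] .
  finally have "(q + q * q) * (q * q - q) \<le> 0"
    by (simp add: algebra_simps)
  moreover have "q * q - q \<le> (q + q * q) * q"
    using \<open>0 \<le> q\<close> f_mult_nonneg[OF \<open>0 \<le> q * q\<close> \<open>0 \<le> q\<close>]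
    by (simp add: distrib_right) (meson neg_le_0_iff_le order_trans)
  moreover have "0 \<le> q + q * q"
    using \<open>0 \<le> q\<close> \<open>0 \<le> q * q\<close> by simp
  ultimately have "q * q - q \<le> 0"
    using f_nonpos_of_mult_nonpos[OF _ _ \<open>0 \<le> q\<close>] by blast
  then show ?thesis
    by simp
qed

lemma f_mult_self_le_self_of_le:
  fixes y q :: 'a
  assumes "0 \<le> y" and "y \<le> q" and "q * q \<le> q"
  shows "y * y \<le> y"
proof -
  have "0 \<le> q"
    using assms(1,2) by (rule order_trans)
  have "q * (q * y - y) = (q * q) * y - q * y"
    by (simp add: algebra_simps mult.assoc)
  also have "\<dots> \<le> 0"
    using f_mult_right_mono[OF assms(1,3)] by simp
  finally have "q * (q * y - y) \<le> 0" .
  moreover have "q * y - y \<le> q * y"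
    using assms(1) by simp
  ultimately have "q * y - y \<le> 0"
    using f_nonpos_of_mult_nonpos[OF \<open>0 \<le> q\<close> _ assms(1)] by blast
  then show ?thesis
    using f_mult_right_mono[OF assms(1,2)] by simp
qed

lemma mem_subalgebra_if_vabs_le:
  fixes a b :: 'a
  assumes "archimedean_vl TYPE('a)" and "ru_complete TYPE('a)"
    and "subalgebra B" and "bounded_elements \<subseteq> B"
    and "b \<in> B" and "vabs a \<le> vabs b"
  shows "a \<in> B"
proof -
  define c where "c = vabs b"
  define s where "s = c * c"
  have "0 \<le> c" "0 \<le> s"
    by (simp_all add: c_def s_def f_mult_nonneg)
  interpret T: expansive_riesz_hom "\<lambda>y. y + s * y"
    using \<open>0 \<le> s\<close> by (rule f_expansive_riesz_hom_add_mult)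
  obtain v q where v: "v + s * v = a" and q: "q + s * q = c"
    using T.surj[OF assms(1,2)] by (metis surjD)
  have "vabs v + s * vabs v \<le> q + s * q"
    using T.map_vabs[of v] assms(6) by (simp add: v q c_def)
  then have "vabs v \<le> q"
    by (simp only: T.le_iff)
  then have "0 \<le> q"
    using vl.abs_ge_zero by (rule order_trans[rotated])
  have "c * q + s * (c * q) = c * (q + s * q)"
    by (simp add: s_def distrib_left mult.assoc)
  also have "\<dots> = (q + s * q) * c"
    by (simp add: q)
  also have "\<dots> = q * c + s * (q * c)"
    by (simp add: distrib_right mult.assoc)
  finally have "c * q = q * c"
    by (rule injD[OF T.inj])
  then have "q * q \<le> q"
    using f_mult_self_le_self_of_eq[OF \<open>0 \<le> c\<close> \<open>0 \<le> q\<close>] q by (simp add: s_def)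
  then have "vabs v * vabs v \<le> vabs v"
    using f_mult_self_le_self_of_le[OF vl.abs_ge_zero \<open>vabs v \<le> q\<close>] by simp
  then have "v \<in> bounded_elements"
    unfolding bounded_elements_def by (intro CollectI exI[of _ 1]) (simp add: f_mult_self_eq_vabs[of v])
  then have "v \<in> B"
    using assms(4) by blast
  moreover have "a = v + b * (b * v)"
    using v by (simp add: s_def c_def mult.assoc flip: f_mult_self_eq_vabs)
  ultimately show "a \<in> B"
    using assms(3,5) by (simp add: subalgebra_def)
qed

end

end

theorem corollary9:
  fixes B :: "'a::{real_algebra,ordered_real_vector,lattice} set"
  assumes "f_algebra TYPE('a)"
    and "archimedean_vl TYPE('a)"
    and "semiprime TYPE('a)"
    and "ru_complete TYPE('a)"
    and "subalgebra B"
    and "bounded_elements \<subseteq> B"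
  shows "order_ideal B"
proof -
  have "a \<in> B" if "b \<in> B" and "vabs a \<le> vabs b" for a b
    using mem_subalgebra_if_vabs_le[OF assms(1,3,2,4,5,6) that] .
  then show ?thesis
    using assms(5) unfolding order_ideal_def subalgebra_def by blast
qed

end
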